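(* Let $n\ge2$, $A\in\mathbb{R}^{n\times m}$, $B\in\mathbb{R}^{m\times n}$. If the DSR graph $G_{A,B}$ is steady, then the DSR$^{[2]}$ graph $G^{[2]}_{A,B}$ is steady. In particular, if $G_{A,B}$ is acyclic, then $G^{[2]}_{A,B}$ is steady.
   Context: DSR graphs: for $P\in\mathbb{R}^{n\times m}$, $Q\in\mathbb{R}^{m\times n}$, $G_{P,Q}$ is the signed, labelled bipartite digraph with S-vertices $S_1,\dots,S_n$ and R-vertices $R_1,\dots,R_m$, with an arc $R_j\to S_i$ of sign $\mathrm{sign}(P_{ij})$ iff $P_{ij}\ne0$ and an arc $S_i\to R_j$ of sign $\mathrm{sign}(Q_{ji})$ iff $Q_{ji}\ne0$; antiparallel arcs of equal sign are merged into a single undirected edge. An edge arising from $P_{ij}\ne0$ (R-to-S or undirected) has label $|P_{ij}|$; an edge with only S-to-R orientation has label $\infty$. Walks traverse edges consistently with orientation; a cycle is a nonempty closed walk repeating no vertex except first$=$last (a 2-cycle requires two distinct edges between the same vertices). A cycle $(e_1,\dots,e_{2r})$ is an s-cycle if all its labels are finite and $\prod_{i=1}^r l(e_{2i-1})=\prod_{i=1}^r l(e_{2i})$. A DSR graph is steady if all its cycles are s-cycles, and acyclic if it has no cycles. DSR$^{[2]}$ graph: let $\overline{\mathbf L}^A\in\mathbb{R}^{\binom n2\times mn}$ (rows $(i,j)$, $i<j$; columns $(k,l)$, $1\le k\le m$, $1\le l\le n$) have entries $A_{jk}$ if $l=i$, $-A_{ik}$ if $l=j$, $0$ otherwise, and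 $\underline{\mathbf L}^B\in\mathbb{R}^{mn\times\binom n2}$ have $(k,l),(i,j)$ entry $B_{kj}$ if $l=i$, $-B_{ki}$ if $l=j$, $0$ otherwise. Then $G^{[2]}_{A,B}:=G_{\overline{\mathbf L}^A,\underline{\mathbf L}^B}$. *)

theory Defs
  imports Main "HOL.Real"
begin

datatype ('s, 'r) dsr_vertex = SV 's | RV 'r

text \<open>An edge is a triple (i, j, b) joining S_i and R_j.
  b = True: the edge arising from P i j \<noteq> 0 (an R-to-S arc, merged into an undirected
  edge if Q j i \<noteq> 0 has the same sign); its label is |P i j|.
  b = False: the edge with only S-to-R orientation, present iff Q j i \<noteq> 0 and
  it was not merged; its label is \<infinity>.\<close>
type_synonym ('s, 'r) dsr_edge = "'s \<times> 'r \<times> bool"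

definition dsr_undirected :: "('s \<Rightarrow> 'r \<Rightarrow> real) \<Rightarrow> ('r \<Rightarrow> 's \<Rightarrow> real) \<Rightarrow> 's \<Rightarrow> 'r \<Rightarrow> bool" where
  "dsr_undirected P Q i j \<longleftrightarrow> P i j \<noteq> 0 \<and> Q j i \<noteq> 0 \<and> sgn (P i j) = sgn (Q j i)"

definition dsr_step ::
  "'s set \<Rightarrow> 'r set \<Rightarrow> ('s \<Rightarrow> 'r \<Rightarrow> real) \<Rightarrow> ('r \<Rightarrow> 's \<Rightarrow> real)
   \<Rightarrow> ('s, 'r) dsr_edge \<Rightarrow> ('s, 'r) dsr_vertex \<Rightarrow> ('s, 'r) dsr_vertex \<Rightarrow> bool" where
  "dsr_step SI RI P Q e u v \<longleftrightarrow>
     (case e of (i, j, b) \<Rightarrow> i \<in> SI \<and> j \<in> RI \<and>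
       (if b then
          P i j \<noteq> 0 \<and>
          ((u = RV j \<and> v = SV i) \<or> (u = SV i \<and> v = RV j \<and> dsr_undirected P Q i j))
        else
          Q j i \<noteq> 0 \<and> \<not> dsr_undirected P Q i j \<and> u = SV i \<and> v = RV j))"

text \<open>Label of an edge: Some l for a finite label l, None for \<infinity>.\<close>
definition dsr_label :: "('s \<Rightarrow> 'r \<Rightarrow> real) \<Rightarrow> ('s, 'r) dsr_edge \<Rightarrow> real option" where
  "dsr_label P e = (case e of (i, j, b) \<Rightarrow> if b then Some \<bar>P i j\<bar> else None)"

text \<open>A cycle: vertices vs!0,...,vs!(L-1) (pairwise distinct), edges es!k traversed from
  vs!k to vs!((k+1) mod L); edges pairwise distinct (this only matters for 2-cycles,
  which need two distinct edges).\<close>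
definition dsr_cycle ::
  "'s set \<Rightarrow> 'r set \<Rightarrow> ('s \<Rightarrow> 'r \<Rightarrow> real) \<Rightarrow> ('r \<Rightarrow> 's \<Rightarrow> real)
   \<Rightarrow> ('s, 'r) dsr_vertex list \<Rightarrow> ('s, 'r) dsr_edge list \<Rightarrow> bool" where
  "dsr_cycle SI RI P Q vs es \<longleftrightarrow>
     length vs > 0 \<and> length es = length vs \<and> distinct vs \<and> distinct es \<and>
     (\<forall>k < length vs. dsr_step SI RI P Q (es ! k) (vs ! k) (vs ! ((k + 1) mod length vs)))"

text \<open>s-cycle: all labels finite, and the product of the labels of e_1, e_3, ... equals the
  product of the labels of e_2, e_4, ... (0-based: even vs odd positions).\<close>
definition dsr_s_cycle :: "('s \<Rightarrow> 'r \<Rightarrow> real) \<Rightarrow> ('s, 'r) dsr_edge list \<Rightarrow> bool" where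
  "dsr_s_cycle P es \<longleftrightarrow>
     (\<forall>k < length es. dsr_label P (es ! k) \<noteq> None) \<and>
     (\<Prod>k \<in> {k. k < length es \<and> even k}. the (dsr_label P (es ! k))) =
     (\<Prod>k \<in> {k. k < length es \<and> odd k}. the (dsr_label P (es ! k)))"

definition dsr_steady ::
  "'s set \<Rightarrow> 'r set \<Rightarrow> ('s \<Rightarrow> 'r \<Rightarrow> real) \<Rightarrow> ('r \<Rightarrow> 's \<Rightarrow> real) \<Rightarrow> bool" where
  "dsr_steady SI RI P Q \<longleftrightarrow> (\<forall>vs es. dsr_cycle SI RI P Q vs es \<longrightarrow> dsr_s_cycle P es)"

definition dsr_acyclic ::
  "'s set \<Rightarrow> 'r set \<Rightarrow> ('s \<Rightarrow> 'r \<Rightarrow> real) \<Rightarrow> ('r \<Rightarrow> 's \<Rightarrow> real) \<Rightarrow> bool" where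
  "dsr_acyclic SI RI P Q \<longleftrightarrow> (\<nexists>vs es. dsr_cycle SI RI P Q vs es)"

text \<open>Matrices A (n x m) and B (m x n) are functions on 1-based indices.
  The second additive compound-type matrices, rows/columns indexed by pairs.\<close>
definition Lbar :: "(nat \<Rightarrow> nat \<Rightarrow> real) \<Rightarrow> nat \<times> nat \<Rightarrow> nat \<times> nat \<Rightarrow> real" where
  "Lbar A = (\<lambda>(i, j) (k, l). if l = i then A j k else if l = j then - A i k else 0)"

definition Lund :: "(nat \<Rightarrow> nat \<Rightarrow> real) \<Rightarrow> nat \<times> nat \<Rightarrow> nat \<times> nat \<Rightarrow> real" where
  "Lund B = (\<lambda>(k, l) (i, j). if l = i then B k j else if l = j then - B k i else 0)"

definition pair_S_index :: "nat \<Rightarrow> (nat \<times> nat) set" where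
  "pair_S_index n = {(i, j). 1 \<le> i \<and> i < j \<and> j \<le> n}"

definition pair_R_index :: "nat \<Rightarrow> nat \<Rightarrow> (nat \<times> nat) set" where
  "pair_R_index m n = {1..m} \<times> {1..n}"

definition steady_G :: "nat \<Rightarrow> nat \<Rightarrow> (nat \<Rightarrow> nat \<Rightarrow> real) \<Rightarrow> (nat \<Rightarrow> nat \<Rightarrow> real) \<Rightarrow> bool" where
  "steady_G n m A B = dsr_steady {1..n} {1..m} A B"

definition acyclic_G :: "nat \<Rightarrow> nat \<Rightarrow> (nat \<Rightarrow> nat \<Rightarrow> real) \<Rightarrow> (nat \<Rightarrow> nat \<Rightarrow> real) \<Rightarrow> bool" where
  "acyclic_G n m A B = dsr_acyclic {1..n} {1..m} A B"

definition steady_G2 :: "nat \<Rightarrow> nat \<Rightarrow> (nat \<Rightarrow> nat \<Rightarrow> real) \<Rightarrow> (nat \<Rightarrow> nat \<Rightarrow> real) \<Rightarrow> bool" where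
  "steady_G2 n m A B = dsr_steady (pair_S_index n) (pair_R_index m n) (Lbar A) (Lund B)"

end

theory Submission
  imports Defs "HOL-Library.Multiset"
begin

text \<open>Read a vertex of G[2] as an unordered pair of tokens placed on G: the S-vertex
  (i, j) as {S_i, S_j} and the R-vertex (k, l) as {R_k, S_l}. Traversing an edge of G[2]
  moves one token along an edge of G with the same label and orientation while the other
  token S_l stays put. Hence a cycle of G[2] splits into two walks in G whose arcs together
  are those of the cycle; as the token pair returns to itself, these are either two closed
  walks or the two halves of one. In a steady graph every closed walk is balanced (the labels
  of the arcs leaving S-vertices and of those leaving R-vertices have equal products), since
  a closed walk decomposes into cycles and undirected edges traversed back and forth.
  Balance depends only on the multiset of arcs, so it carries over to the cycle of G[2].\<close>

lemma not_distinct_map_decomp: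
  assumes "\<not> distinct (map f xs)"
  obtains ys zs us where "xs = ys @ zs @ us" "zs \<noteq> []" "us \<noteq> []" "f (hd zs) = f (hd us)"
proof -
  obtain i j where ij: "i < j" "j < length xs" "f (xs ! i) = f (xs ! j)"
  proof -
    obtain i j where "i < length xs" "j < length xs" "i \<noteq> j" "f (xs ! i) = f (xs ! j)"
      using assms by (auto simp: distinct_conv_nth)
    then show ?thesis using that by (cases "i < j") (auto simp: not_less_iff_gr_or_eq)
  qed
  have "drop (j - i) (drop i xs) = drop j xs" using ij by simp
  then have "xs = take i xs @ take (j - i) (drop i xs) @ drop j xs"
    by (metis append_take_drop_id)
  then show ?thesis
  proof (rule that)
    show "take (j - i) (drop i xs) \<noteq> []" "drop j xs \<noteq> []" using ij by auto
    show "f (hd (take (j - i) (drop i xs))) = f (hd (drop j xs))" using ij by (simp add: hd_drop_conv_nth)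
  qed
qed

lemma prod_list_map_mset_eq:
  fixes f :: "'a \<Rightarrow> 'b :: comm_monoid_mult"
  assumes "mset xs = mset ys"
  shows "(\<Prod>x\<leftarrow>xs. f x) = (\<Prod>y\<leftarrow>ys. f y)"
proof -
  have "(\<Prod>x\<leftarrow>xs. f x) = prod_mset (mset (map f xs))" by (rule prod_mset_prod_list[symmetric])
  also have "\<dots> = prod_mset (mset (map f ys))" by (simp only: mset_map assms)
  also have "\<dots> = (\<Prod>y\<leftarrow>ys. f y)" by (rule prod_mset_prod_list)
  finally show ?thesis .
qed

type_synonym ('s, 'r) dsr_arc = "('s, 'r) dsr_vertex \<times> ('s, 'r) dsr_edge \<times> ('s, 'r) dsr_vertex"

abbreviation arc_src :: "('s, 'r) dsr_arc \<Rightarrow> ('s, 'r) dsr_vertex" where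
  "arc_src a \<equiv> fst a"
abbreviation arc_edge :: "('s, 'r) dsr_arc \<Rightarrow> ('s, 'r) dsr_edge" where
  "arc_edge a \<equiv> fst (snd a)"
abbreviation arc_tgt :: "('s, 'r) dsr_arc \<Rightarrow> ('s, 'r) dsr_vertex" where
  "arc_tgt a \<equiv> snd (snd a)"

fun is_SV :: "('s, 'r) dsr_vertex \<Rightarrow> bool" where
  "is_SV (SV _) = True"
| "is_SV (RV _) = False"

lemma dsr_step_endpoints:
  "dsr_step SI RI P Q (i, j, b) u v \<Longrightarrow> u = SV i \<and> v = RV j \<or> u = RV j \<and> v = SV i"
  by (auto simp: dsr_step_def split: if_splits)

lemma dsr_step_alternates: "dsr_step SI RI P Q e u v \<Longrightarrow> is_SV u \<noteq> is_SV v"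
  by (cases e) (auto dest: dsr_step_endpoints)

lemma dsr_label_finite_if_from_RV: "dsr_step SI RI P Q e (RV j) v \<Longrightarrow> dsr_label P e \<noteq> None"
  by (auto simp: dsr_step_def dsr_label_def split: if_splits)

definition arc_label :: "('s \<Rightarrow> 'r \<Rightarrow> real) \<Rightarrow> ('s, 'r) dsr_arc \<Rightarrow> real" where
  "arc_label P a = the (dsr_label P (arc_edge a))"

definition side_label_prod :: "('s \<Rightarrow> 'r \<Rightarrow> real) \<Rightarrow> bool \<Rightarrow> ('s, 'r) dsr_arc list \<Rightarrow> real" where
  "side_label_prod P b ws = (\<Prod>a\<leftarrow>ws. if is_SV (arc_src a) = b then arc_label P a else 1)"

text \<open>On an alternating closed walk this is the s-cycle condition, phrased by sides instead
  of positions so that it depends only on the multiset of arcs.\<close>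
definition balanced_walk :: "('s \<Rightarrow> 'r \<Rightarrow> real) \<Rightarrow> ('s, 'r) dsr_arc list \<Rightarrow> bool" where
  "balanced_walk P ws \<longleftrightarrow> (\<forall>a\<in>set ws. dsr_label P (arc_edge a) \<noteq> None) \<and>
     side_label_prod P True ws = side_label_prod P False ws"

lemma side_label_prod_append:
  "side_label_prod P b (ws @ ws') = side_label_prod P b ws * side_label_prod P b ws'"
  by (simp add: side_label_prod_def)

lemma side_label_prod_mset_eq:
  "mset ws = mset ws' \<Longrightarrow> side_label_prod P b ws = side_label_prod P b ws'"
  unfolding side_label_prod_def by (rule prod_list_map_mset_eq)

lemma side_label_prod_conv_nth:
  "side_label_prod P b ws = (\<Prod>k | k < length ws \<and> is_SV (arc_src (ws ! k)) = b. arc_label P (ws ! k))"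
proof -
  have "side_label_prod P b ws =
      (\<Prod>k\<in>{..<length ws}. if is_SV (arc_src (ws ! k)) = b then arc_label P (ws ! k) else 1)"
    unfolding side_label_prod_def by (simp add: prod.list_conv_set_nth atLeast0LessThan)
  also have "\<dots> = (\<Prod>k\<in>{k \<in> {..<length ws}. is_SV (arc_src (ws ! k)) = b}. arc_label P (ws ! k))"
    by (rule prod.inter_filter[symmetric]) simp
  finally show ?thesis by simp
qed

lemma balanced_walk_mset_eq: "mset ws = mset ws' \<Longrightarrow> balanced_walk P ws = balanced_walk P ws'"
proof -
  assume eq: "mset ws = mset ws'"
  then have "set ws = set ws'" by (metis set_mset_mset)
  then show ?thesis by (simp add: balanced_walk_def side_label_prod_mset_eq[OF eq])
qed

lemma balanced_walk_append:
  "balanced_walk P ws \<Longrightarrow> balanced_walk P ws' \<Longrightarrow> balanced_walk P (ws @ ws')"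
  by (auto simp: balanced_walk_def side_label_prod_append)

lemma balanced_walk_map:
  assumes "\<And>a. a \<in> set ws \<Longrightarrow>
    is_SV (arc_src (f a)) = is_SV (arc_src a) \<and> dsr_label P' (arc_edge (f a)) = dsr_label P (arc_edge a)"
  shows "balanced_walk P' (map f ws) = balanced_walk P ws"
proof -
  have "side_label_prod P' b (map f ws) = side_label_prod P b ws" for b
    unfolding side_label_prod_def arc_label_def by (auto simp: assms intro!: arg_cong[where f = prod_list])
  then show ?thesis using assms by (simp add: balanced_walk_def)
qed

definition cycle_arcs :: "('s, 'r) dsr_vertex list \<Rightarrow> ('s, 'r) dsr_edge list \<Rightarrow> ('s, 'r) dsr_arc list" where
  "cycle_arcs vs es = zip vs (zip es (rotate1 vs))"

context
  fixes SI :: "'s set" and RI :: "'r set"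
    and P :: "'s \<Rightarrow> 'r \<Rightarrow> real" and Q :: "'r \<Rightarrow> 's \<Rightarrow> real"
begin

fun dsr_walk :: "('s, 'r) dsr_vertex \<Rightarrow> ('s, 'r) dsr_arc list \<Rightarrow> ('s, 'r) dsr_vertex \<Rightarrow> bool" where
  "dsr_walk x [] y \<longleftrightarrow> x = y"
| "dsr_walk x (a # ws) y \<longleftrightarrow>
     arc_src a = x \<and> dsr_step SI RI P Q (arc_edge a) x (arc_tgt a) \<and> dsr_walk (arc_tgt a) ws y"

lemma dsr_walk_append_iff: "dsr_walk x (ws @ ws') z \<longleftrightarrow> (\<exists>y. dsr_walk x ws y \<and> dsr_walk y ws' z)"
  by (induction ws arbitrary: x) auto

lemma dsr_walk_iff_vertex_lists:
  "dsr_walk x ws y \<longleftrightarrow> map arc_src ws @ [y] = x # map arc_tgt ws \<and>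
     (\<forall>a\<in>set ws. dsr_step SI RI P Q (arc_edge a) (arc_src a) (arc_tgt a))"
  by (induction ws arbitrary: x) auto

lemma dsr_walk_hd_src: "dsr_walk x ws y \<Longrightarrow> ws \<noteq> [] \<Longrightarrow> arc_src (hd ws) = x"
  by (cases ws) auto

lemma dsr_walk_arcs_are_steps:
  "dsr_walk x ws y \<Longrightarrow> a \<in> set ws \<Longrightarrow> dsr_step SI RI P Q (arc_edge a) (arc_src a) (arc_tgt a)"
  by (induction ws arbitrary: x) auto

lemma closed_walk_targets: "dsr_walk x ws x \<Longrightarrow> map arc_tgt ws = rotate1 (map arc_src ws)"
  by (cases ws) (auto simp: dsr_walk_iff_vertex_lists)

lemma closed_walk_target_nth:
  assumes "dsr_walk x ws x" "k < length ws"
  shows "arc_tgt (ws ! k) = arc_src (ws ! (Suc k mod length ws))"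
proof -
  have mod_lt: "Suc k mod length ws < length ws" by (rule mod_less_divisor) (use assms(2) in auto)
  have "arc_tgt (ws ! k) = rotate1 (map arc_src ws) ! k"
    using assms(2) by (simp flip: closed_walk_targets[OF assms(1)])
  also have "\<dots> = arc_src (ws ! (Suc k mod length ws))"
    using assms(2) mod_lt by (simp add: nth_rotate1)
  finally show ?thesis .
qed

lemma dsr_walk_sides:
  "dsr_walk x ws y \<Longrightarrow> k < length ws \<Longrightarrow> is_SV (arc_src (ws ! k)) \<longleftrightarrow> (is_SV x \<longleftrightarrow> even k)"
proof (induction ws arbitrary: x k)
  case (Cons a ws)
  have "dsr_walk (arc_tgt a) ws y" and "is_SV (arc_tgt a) \<longleftrightarrow> \<not> is_SV x"
    using Cons.prems(1) by (auto dest: dsr_step_alternates)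
  then show ?case using Cons.IH Cons.prems(1,2) by (cases k) auto
qed simp

lemma dsr_cycle_closed_walk:
  assumes "dsr_cycle SI RI P Q vs es"
  shows "dsr_walk (hd vs) (cycle_arcs vs es) (hd vs)" and "map arc_edge (cycle_arcs vs es) = es"
proof -
  have len: "vs \<noteq> []" "length es = length vs" using assms by (auto simp: dsr_cycle_def)
  show "map arc_edge (cycle_arcs vs es) = es"
    using len by (intro nth_equalityI) (simp_all add: cycle_arcs_def)
  have src: "map arc_src (cycle_arcs vs es) = vs" and tgt: "map arc_tgt (cycle_arcs vs es) = rotate1 vs"
    using len by (intro nth_equalityI; simp add: cycle_arcs_def)+
  have steps: "dsr_step SI RI P Q (arc_edge a) (arc_src a) (arc_tgt a)"
    if a: "a \<in> set (cycle_arcs vs es)" for a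
  proof -
    have "length (cycle_arcs vs es) = length vs" using len by (simp add: cycle_arcs_def)
    then obtain k where k: "k < length vs" "a = cycle_arcs vs es ! k"
      using a by (metis in_set_conv_nth)
    then have "a = (vs ! k, es ! k, rotate1 vs ! k)" using len by (simp add: cycle_arcs_def)
    then show ?thesis using assms k(1) by (simp add: dsr_cycle_def nth_rotate1)
  qed
  have "vs @ [hd vs] = hd vs # rotate1 vs" using len by (cases vs) simp_all
  then show "dsr_walk (hd vs) (cycle_arcs vs es) (hd vs)"
    unfolding dsr_walk_iff_vertex_lists src tgt using steps by blast
qed

lemma closed_walk_dsr_cycle:
  assumes "dsr_walk x ws x" "ws \<noteq> []" "distinct (map arc_src ws)" "distinct (map arc_edge ws)"
  shows "dsr_cycle SI RI P Q (map arc_src ws) (map arc_edge ws)"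
  unfolding dsr_cycle_def
proof (intro conjI allI impI)
  fix k assume k: "k < length (map arc_src ws)"
  then have "Suc k mod length ws < length ws" by (intro mod_less_divisor) auto
  with k show "dsr_step SI RI P Q (map arc_edge ws ! k) (map arc_src ws ! k)
      (map arc_src ws ! ((k + 1) mod length (map arc_src ws)))"
    using dsr_walk_arcs_are_steps[OF assms(1) nth_mem, of k] closed_walk_target_nth[OF assms(1), of k]
    by simp
qed (use assms(2-4) in simp_all)

lemma dsr_s_cycle_iff_balanced_walk:
  assumes "dsr_walk x ws y"
  shows "dsr_s_cycle P (map arc_edge ws) \<longleftrightarrow> balanced_walk P ws"
proof -
  have "{k. k < length ws \<and> is_SV (arc_src (ws ! k)) = b} = {k. k < length ws \<and> even k = (is_SV x = b)}"
    for b using dsr_walk_sides[OF assms] by auto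
  then have "side_label_prod P b ws =
      (\<Prod>k | k < length ws \<and> even k = (is_SV x = b). the (dsr_label P (map arc_edge ws ! k)))" for b
    unfolding side_label_prod_conv_nth arc_label_def by (auto intro: prod.cong)
  then show ?thesis
    by (cases "is_SV x") (auto simp: dsr_s_cycle_def balanced_walk_def all_set_conv_all_nth)
qed

lemma distinct_closed_walk_reversed_arcs:
  assumes walk: "dsr_walk x ws x" and src: "distinct (map arc_src ws)"
    and kk: "k < k'" "k' < length ws"
    and reversed: "arc_src (ws ! k') = arc_tgt (ws ! k)" "arc_src (ws ! k) = arc_tgt (ws ! k')"
  shows "k = 0" "k' = 1" "length ws = 2"
proof -
  have src_inj: "i = j" if "arc_src (ws ! i) = arc_src (ws ! j)" "i < length ws" "j < length ws" for i j
    using nth_eq_iff_index_eq[OF src, of i j] that by simp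
  have "arc_src (ws ! k') = arc_src (ws ! (Suc k mod length ws))"
    using reversed(1) closed_walk_target_nth[OF walk, of k] kk by simp
  then have "k' = Suc k mod length ws" by (rule src_inj) (use kk in auto)
  then have k': "k' = Suc k" using kk by simp
  have "arc_src (ws ! k) = arc_src (ws ! (Suc k' mod length ws))"
    using reversed(2) closed_walk_target_nth[OF walk, of k'] kk by simp
  moreover have "Suc k' mod length ws < length ws" using kk(2) by (intro mod_less_divisor) linarith
  ultimately have "k = Suc k' mod length ws" using kk by (intro src_inj) auto
  then show "k = 0" "k' = 1" "length ws = 2" using kk k' by (auto simp: mod_if split: if_splits)
qed

text \<open>With all vertices distinct, a repeated edge forces the walk to be one undirected edge
  traversed in both directions.\<close>
lemma closed_walk_repeated_edge_balanced:
  assumes walk: "dsr_walk x ws x" and src: "distinct (map arc_src ws)"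
    and edge: "\<not> distinct (map arc_edge ws)"
  shows "balanced_walk P ws"
proof -
  obtain k k' where kk: "k < k'" "k' < length ws" "arc_edge (ws ! k) = arc_edge (ws ! k')"
  proof -
    obtain i j where "i < length ws" "j < length ws" "i \<noteq> j" "arc_edge (ws ! i) = arc_edge (ws ! j)"
      using edge by (auto simp: distinct_conv_nth)
    then show ?thesis using that by (metis linorder_neqE_nat)
  qed
  obtain i j b where e: "arc_edge (ws ! k) = (i, j, b)" by (cases "arc_edge (ws ! k)") auto
  have steps: "dsr_step SI RI P Q (i, j, b) (arc_src (ws ! k)) (arc_tgt (ws ! k))"
    "dsr_step SI RI P Q (i, j, b) (arc_src (ws ! k')) (arc_tgt (ws ! k'))"
    using dsr_walk_arcs_are_steps[OF walk nth_mem, of k] dsr_walk_arcs_are_steps[OF walk nth_mem, of k']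
      kk e
    by simp_all
  note endpoints = steps[THEN dsr_step_endpoints]
  have "arc_src (ws ! k) \<noteq> arc_src (ws ! k')"
    using nth_eq_iff_index_eq[OF src, of k k'] kk by simp
  with endpoints have reversed:
    "arc_src (ws ! k') = arc_tgt (ws ! k)" "arc_src (ws ! k) = arc_tgt (ws ! k')"
    by auto
  note shape = distinct_closed_walk_reversed_arcs[OF walk src kk(1,2) reversed]
  then have ws: "ws = [ws ! k, ws ! k']" by (auto intro!: nth_equalityI simp: less_2_cases_iff)
  have "arc_src (ws ! k) = RV j \<or> arc_src (ws ! k') = RV j" using endpoints reversed by auto
  then have "dsr_label P (i, j, b) \<noteq> None" using steps by (metis dsr_label_finite_if_from_RV)
  moreover have "is_SV (arc_src (ws ! k)) \<noteq> is_SV (arc_src (ws ! k'))"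
    using endpoints reversed by auto
  ultimately show ?thesis using e kk(3)
    by (subst ws) (auto simp: balanced_walk_def side_label_prod_def arc_label_def)
qed

lemma steady_closed_walk_balanced:
  assumes steady: "dsr_steady SI RI P Q"
  shows "dsr_walk x ws x \<Longrightarrow> balanced_walk P ws"
proof (induction "length ws" arbitrary: x ws rule: less_induct)
  case less
  show ?case
  proof (cases "distinct (map arc_src ws)")
    case False
    then obtain ys zs us where ws: "ws = ys @ zs @ us" and ne: "zs \<noteq> []" "us \<noteq> []"
      and loop: "arc_src (hd zs) = arc_src (hd us)"
      by (rule not_distinct_map_decomp)
    from less.prems ws obtain y y' where walks: "dsr_walk x ys y" "dsr_walk y zs y'" "dsr_walk y' us x"
      by (auto simp: dsr_walk_append_iff)
    have "y = y'"
      using dsr_walk_hd_src[OF walks(2) ne(1)] dsr_walk_hd_src[OF walks(3) ne(2)] loop by simp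
    with walks have "dsr_walk y zs y" "dsr_walk x (ys @ us) x"
      by (auto simp: dsr_walk_append_iff)
    moreover have "length zs < length ws" "length (ys @ us) < length ws" using ws ne by auto
    ultimately have "balanced_walk P zs" "balanced_walk P (ys @ us)"
      using less.hyps by blast+
    then have "balanced_walk P (zs @ ys @ us)" by (rule balanced_walk_append)
    moreover have "mset (zs @ ys @ us) = mset ws" using ws by simp
    ultimately show ?thesis using balanced_walk_mset_eq[of "zs @ ys @ us" ws P] by simp
  next
    case src: True
    show ?thesis
    proof (cases "distinct (map arc_edge ws)")
      case False
      with less.prems src show ?thesis by (rule closed_walk_repeated_edge_balanced)
    next
      case edge: True
      show ?thesis
      proof (cases "ws = []")
        case True
        then show ?thesis by (simp add: balanced_walk_def side_label_prod_def)
      next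
        case False
        from closed_walk_dsr_cycle[OF less.prems False src edge]
        show ?thesis
          using steady dsr_s_cycle_iff_balanced_walk[OF less.prems] by (simp add: dsr_steady_def)
      qed
    qed
  qed
qed

lemma steady_walk_pair_balanced:
  assumes steady: "dsr_steady SI RI P Q"
    and w1: "dsr_walk x w1 x'" and w2: "dsr_walk y w2 y'" and ends: "{x', y'} = {x, y}"
  shows "balanced_walk P (w1 @ w2)"
proof -
  from ends have "x' = x \<and> y' = y \<or> x' = y \<and> y' = x" by (auto simp: doubleton_eq_iff)
  then show ?thesis
  proof
    assume "x' = x \<and> y' = y"
    with w1 w2 have "balanced_walk P w1" "balanced_walk P w2"
      using steady_closed_walk_balanced[OF steady] by simp_all
    then show ?thesis by (rule balanced_walk_append)
  next
    assume "x' = y \<and> y' = x"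
    with w1 w2 have "dsr_walk x (w1 @ w2) x" by (auto simp: dsr_walk_append_iff)
    then show ?thesis by (rule steady_closed_walk_balanced[OF steady])
  qed
qed

end

fun tokens :: "(nat \<times> nat, nat \<times> nat) dsr_vertex \<Rightarrow> (nat, nat) dsr_vertex set" where
  "tokens (SV (i, j)) = {SV i, SV j}"
| "tokens (RV (k, l)) = {RV k, SV l}"

text \<open>On an edge incident to S_(i,j) and R_(k,l) we have l \<in> {i, j}, and i + j - l is the
  other element.\<close>
fun token_edge :: "(nat \<times> nat, nat \<times> nat) dsr_edge \<Rightarrow> (nat, nat) dsr_edge" where
  "token_edge ((i, j), (k, l), b) = (i + j - l, k, b)"

fun moved_token ::
  "(nat \<times> nat, nat \<times> nat) dsr_edge \<Rightarrow> (nat \<times> nat, nat \<times> nat) dsr_vertex \<Rightarrow> (nat, nat) dsr_vertex"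
where
  "moved_token ((i, j), (k, l), b) (SV _) = SV (i + j - l)"
| "moved_token ((i, j), (k, l), b) (RV _) = RV k"

fun fixed_token :: "(nat \<times> nat, nat \<times> nat) dsr_edge \<Rightarrow> (nat, nat) dsr_vertex" where
  "fixed_token ((i, j), (k, l), b) = SV l"

definition token_arc :: "(nat \<times> nat, nat \<times> nat) dsr_arc \<Rightarrow> (nat, nat) dsr_arc" where
  "token_arc a = (moved_token (arc_edge a) (arc_src a), token_edge (arc_edge a),
     moved_token (arc_edge a) (arc_tgt a))"

lemma Lbar_Lund_off_incidence:
  "l \<noteq> i \<Longrightarrow> l \<noteq> j \<Longrightarrow> Lbar A (i, j) (k, l) = 0 \<and> Lund B (k, l) (i, j) = 0"
  by (simp add: Lbar_def Lund_def)

lemma Lbar_Lund_at_incidence: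
  assumes "i < j" "l = i \<or> l = j"
  shows "Lbar A (i, j) (k, l) = (if l = i then 1 else -1) * A (i + j - l) k"
    and "Lund B (k, l) (i, j) = (if l = i then 1 else -1) * B k (i + j - l)"
  using assms by (auto simp: Lbar_def Lund_def)

lemma dsr_undirected_scaled:
  assumes "c \<noteq> 0" "P' i' j' = c * P i j" "Q' j' i' = c * Q j i"
  shows "dsr_undirected P' Q' i' j' \<longleftrightarrow> dsr_undirected P Q i j"
  using assms by (auto simp: dsr_undirected_def sgn_mult sgn_0_0)

lemma compound_step_moves_one_token:
  assumes step: "dsr_step (pair_S_index n) (pair_R_index m n) (Lbar A) (Lund B) e u v"
  shows "dsr_step {1..n} {1..m} A B (token_edge e) (moved_token e u) (moved_token e v)"
    and "dsr_label (Lbar A) e = dsr_label A (token_edge e)"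
    and "tokens u = {moved_token e u, fixed_token e}" "moved_token e u \<noteq> fixed_token e"
    and "tokens v = {moved_token e v, fixed_token e}" "moved_token e v \<noteq> fixed_token e"
    and "is_SV (moved_token e u) = is_SV u"
proof -
  obtain i j k l b where e: "e = ((i, j), (k, l), b)" by (cases e) auto
  have ij: "1 \<le> i" "i < j" "j \<le> n" and kl: "1 \<le> k" "k \<le> m" "1 \<le> l" "l \<le> n"
    using step e by (auto simp: dsr_step_def pair_S_index_def pair_R_index_def)
  have "Lbar A (i, j) (k, l) \<noteq> 0 \<or> Lund B (k, l) (i, j) \<noteq> 0"
    using step e by (auto simp: dsr_step_def split: if_splits)
  then have l: "l = i \<or> l = j" using Lbar_Lund_off_incidence by blast
  define c :: real where "c = (if l = i then 1 else -1)"
  have c: "c \<noteq> 0" "\<And>x. \<bar>c * x\<bar> = \<bar>x\<bar>" by (simp_all add: c_def)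
  note entries = Lbar_Lund_at_incidence[OF ij(2) l, folded c_def]
  have und: "dsr_undirected (Lbar A) (Lund B) (i, j) (k, l) \<longleftrightarrow> dsr_undirected A B (i + j - l) k"
    using c(1) entries by (rule dsr_undirected_scaled)
  have ends: "u = SV (i, j) \<and> v = RV (k, l) \<or> u = RV (k, l) \<and> v = SV (i, j)"
    using step e by (auto dest: dsr_step_endpoints)
  have "1 \<le> i + j - l" "i + j - l \<le> n" "i + j - l \<noteq> l" using ij l by auto
  then show "dsr_step {1..n} {1..m} A B (token_edge e) (moved_token e u) (moved_token e v)"
    using step ends kl c(1) unfolding e by (auto simp: dsr_step_def entries und)
  show "dsr_label (Lbar A) e = dsr_label A (token_edge e)"
    using c(2) by (simp add: e dsr_label_def entries)
  show "tokens u = {moved_token e u, fixed_token e}" "moved_token e u \<noteq> fixed_token e"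
    "tokens v = {moved_token e v, fixed_token e}" "moved_token e v \<noteq> fixed_token e"
    "is_SV (moved_token e u) = is_SV u"
    using ends ij l \<open>i + j - l \<noteq> l\<close> by (auto simp: e insert_commute)
qed

lemma compound_walk_splits_into_token_walks:
  assumes "dsr_walk (pair_S_index n) (pair_R_index m n) (Lbar A) (Lund B) V ws W"
    and "tokens V = {x, y}" "x \<noteq> y"
  shows "\<exists>x' y' w1 w2. tokens W = {x', y'} \<and>
    dsr_walk {1..n} {1..m} A B x w1 x' \<and> dsr_walk {1..n} {1..m} A B y w2 y' \<and>
    map token_arc ws \<in> shuffles w1 w2"
  using assms
proof (induction ws arbitrary: V x y)
  case Nil
  then show ?case by (intro exI[of _ x] exI[of _ y] exI[of _ "[]"]) simp
next
  case (Cons a ws)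
  let ?e = "arc_edge a" and ?V' = "arc_tgt a"
  have step: "dsr_step (pair_S_index n) (pair_R_index m n) (Lbar A) (Lund B) ?e V ?V'"
    and walk: "dsr_walk (pair_S_index n) (pair_R_index m n) (Lbar A) (Lund B) ?V' ws W"
    and src: "arc_src a = V"
    using Cons.prems(1) by simp_all
  note moves = compound_step_moves_one_token[OF step]
  have arc: "token_arc a = (moved_token ?e V, token_edge ?e, moved_token ?e ?V')"
    using src by (simp add: token_arc_def)
  have "x = moved_token ?e V \<and> y = fixed_token ?e \<or> x = fixed_token ?e \<and> y = moved_token ?e V"
    using Cons.prems(2,3) moves(3,4) by (auto simp: doubleton_eq_iff)
  then show ?case
  proof
    assume xy: "x = moved_token ?e V \<and> y = fixed_token ?e"
    then obtain x' y' w1 w2 where "tokens W = {x', y'}"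
      "dsr_walk {1..n} {1..m} A B (moved_token ?e ?V') w1 x'" "dsr_walk {1..n} {1..m} A B y w2 y'"
      "map token_arc ws \<in> shuffles w1 w2"
      using Cons.IH[OF walk moves(5,6)] by blast
    then show ?thesis using xy arc moves(1)
      by (intro exI[of _ x'] exI[of _ y'] exI[of _ "token_arc a # w1"] exI[of _ w2])
        (simp add: Cons_in_shuffles_leftI)
  next
    assume xy: "x = fixed_token ?e \<and> y = moved_token ?e V"
    then have "tokens ?V' = {x, moved_token ?e ?V'}" "x \<noteq> moved_token ?e ?V'"
      using moves(5,6) by (simp_all add: insert_commute)
    then obtain x' y' w1 w2 where "tokens W = {x', y'}"
      "dsr_walk {1..n} {1..m} A B x w1 x'" "dsr_walk {1..n} {1..m} A B (moved_token ?e ?V') w2 y'"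
      "map token_arc ws \<in> shuffles w1 w2"
      using Cons.IH[OF walk] by blast
    then show ?thesis using xy arc moves(1)
      by (intro exI[of _ x'] exI[of _ y'] exI[of _ w1] exI[of _ "token_arc a # w2"])
        (simp add: Cons_in_shuffles_rightI)
  qed
qed

lemma balanced_walk_token_arcs:
  assumes "dsr_walk (pair_S_index n) (pair_R_index m n) (Lbar A) (Lund B) V ws W"
  shows "balanced_walk A (map token_arc ws) = balanced_walk (Lbar A) ws"
proof (rule balanced_walk_map)
  fix a assume "a \<in> set ws"
  from compound_step_moves_one_token[OF dsr_walk_arcs_are_steps[OF assms this]]
  show "is_SV (arc_src (token_arc a)) = is_SV (arc_src a) \<and>
      dsr_label A (arc_edge (token_arc a)) = dsr_label (Lbar A) (arc_edge a)"
    by (simp add: token_arc_def)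
qed

lemma steady_G2_if_steady_G:
  assumes "steady_G n m A B"
  shows "steady_G2 n m A B"
  unfolding steady_G2_def dsr_steady_def
proof (intro allI impI)
  fix vs es
  assume cycle: "dsr_cycle (pair_S_index n) (pair_R_index m n) (Lbar A) (Lund B) vs es"
  have steady: "dsr_steady {1..n} {1..m} A B" using assms by (simp add: steady_G_def)
  let ?ws = "cycle_arcs vs es" and ?V = "hd vs"
  have walk: "dsr_walk (pair_S_index n) (pair_R_index m n) (Lbar A) (Lund B) ?V ?ws ?V"
    and edges: "map arc_edge ?ws = es"
    using dsr_cycle_closed_walk[OF cycle] by blast+
  have "?ws \<noteq> []" using cycle by (auto simp: dsr_cycle_def cycle_arcs_def)
  then obtain a ws' where "?ws = a # ws'" by (cases ?ws) auto
  with walk have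
    "dsr_step (pair_S_index n) (pair_R_index m n) (Lbar A) (Lund B) (arc_edge a) ?V (arc_tgt a)"
    by simp
  from compound_step_moves_one_token(3,4)[OF this]
  obtain x y where xy: "tokens ?V = {x, y}" "x \<noteq> y" by blast
  from compound_walk_splits_into_token_walks[OF walk xy]
  obtain x' y' w1 w2 where "{x', y'} = {x, y}" and shuffle: "map token_arc ?ws \<in> shuffles w1 w2"
    and "dsr_walk {1..n} {1..m} A B x w1 x'" "dsr_walk {1..n} {1..m} A B y w2 y'"
    using xy(1) by metis
  then have "balanced_walk A (w1 @ w2)" using steady steady_walk_pair_balanced by blast
  moreover have "mset (map token_arc ?ws) = mset (w1 @ w2)" using mset_shuffles[OF shuffle] by simp
  ultimately have "balanced_walk A (map token_arc ?ws)" using balanced_walk_mset_eq by blast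
  then show "dsr_s_cycle (Lbar A) es"
    using balanced_walk_token_arcs[OF walk] dsr_s_cycle_iff_balanced_walk[OF walk] edges by simp
qed

lemma dsr_steady_if_acyclic: "dsr_acyclic SI RI P Q \<Longrightarrow> dsr_steady SI RI P Q"
  by (simp add: dsr_acyclic_def dsr_steady_def)

theorem corollary5p1:
  fixes n m :: nat and A B :: "nat \<Rightarrow> nat \<Rightarrow> real"
  assumes "n \<ge> 2"
  shows "(steady_G n m A B \<longrightarrow> steady_G2 n m A B) \<and>
         (acyclic_G n m A B \<longrightarrow> steady_G2 n m A B)"
proof -
  have "acyclic_G n m A B \<Longrightarrow> steady_G n m A B"
    unfolding acyclic_G_def steady_G_def by (rule dsr_steady_if_acyclic)
  then show ?thesis using steady_G2_if_steady_G by blast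
qed

end
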